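(* Let $G_1,G_2,G_3$ be graphs on the same vertex set $Y$ with $|Y|\ge8$, each of minimum degree at least $2$, such that there are no pairwise disjoint edges $e_1,e_2,e_3$ with $e_i\in E(G_i)$ for $i=1,2,3$. Then there are two vertices $a,b\in Y$ such that every edge of each $G_i$ contains $a$ or $b$. *)

theory Defs
  imports Main
begin

definition graph_on :: "'a set \<Rightarrow> 'a set set \<Rightarrow> bool" where
  "graph_on Y E \<longleftrightarrow> (\<forall>e\<in>E. e \<subseteq> Y \<and> card e = 2)"

definition degree :: "'a set set \<Rightarrow> 'a \<Rightarrow> nat" where
  "degree E v = card {e\<in>E. v \<in> e}"

definition min_degree_ge :: "'a set \<Rightarrow> 'a set set \<Rightarrow> nat \<Rightarrow> bool" where
  "min_degree_ge Y E k \<longleftrightarrow> (\<forall>v\<in>Y. degree E v \<ge> k)"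

end

theory Submission
  imports Defs
begin

(* Call the three graphs A, B, C.  Because Y has at least 8 vertices, there
   is a vertex avoiding any 7 given ones; this "fresh vertex" principle drives every step.
   First, A and B have disjoint edges {x1,y1} and {x2,y2} (a frame); vertices outside the
   frame are called far.  Every C-edge at a far vertex ends in the frame, as otherwise the
   three edges form a rainbow matching.  A case analysis on the C-neighbours of far
   vertices yields a in {x1,y1} and b in {x2,y2} such that every C-edge at a far vertex
   ends in a or b; minimum degree 2 then makes every far vertex C-adjacent to both a and b.
   Using these C-edges the same star property transfers to B and, by the symmetry A <-> B,
   to A.  Finally, the only frame pair that could avoid {a,b} joins the two other frame
   vertices, and two far vertices show that it is an edge of none of the graphs. *)

section \<open>Graphs seen through their pair edges\<close>

definition pair_edges_on :: "'a set \<Rightarrow> 'a set set \<Rightarrow> bool" where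
  "pair_edges_on Y G \<longleftrightarrow> (\<forall>u v. {u,v} \<in> G \<longrightarrow> u \<noteq> v \<and> u \<in> Y \<and> v \<in> Y)"

definition two_neighbours :: "'a set \<Rightarrow> 'a set set \<Rightarrow> bool" where
  "two_neighbours Y G \<longleftrightarrow> (\<forall>v\<in>Y. \<exists>u w. u \<noteq> w \<and> {v,u} \<in> G \<and> {v,w} \<in> G)"

lemma pair_edgesD: "pair_edges_on Y G \<Longrightarrow> {u,v} \<in> G \<Longrightarrow> u \<noteq> v \<and> u \<in> Y \<and> v \<in> Y"
  unfolding pair_edges_on_def by blast

lemma two_neighboursD:
  "two_neighbours Y G \<Longrightarrow> v \<in> Y \<Longrightarrow> \<exists>u w. u \<noteq> w \<and> {v,u} \<in> G \<and> {v,w} \<in> G"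
  unfolding two_neighbours_def by blast

lemma graph_on_pair_edges: "graph_on Y G \<Longrightarrow> pair_edges_on Y G"
  unfolding graph_on_def pair_edges_on_def by (metis card_2_iff doubleton_eq_iff insert_subset)

lemma graph_on_edge_pair: "graph_on Y G \<Longrightarrow> e \<in> G \<Longrightarrow> \<exists>u v. e = {u,v}"
  unfolding graph_on_def by (metis card_2_iff)

lemma two_elements: "2 \<le> card S \<Longrightarrow> \<exists>x y. x \<in> S \<and> y \<in> S \<and> x \<noteq> y"
proof (rule ccontr)
  assume two: "2 \<le> card S" and "\<not> (\<exists>x y. x \<in> S \<and> y \<in> S \<and> x \<noteq> y)"
  moreover obtain x where "x \<in> S" using two by fastforce
  ultimately have "S = {x}" by auto
  then show False using two by simp
qed

lemma min_degree_two_neighbours: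
  assumes G: "graph_on Y G" and deg: "min_degree_ge Y G 2"
  shows "two_neighbours Y G"
  unfolding two_neighbours_def
proof
  fix v assume v: "v \<in> Y"
  have "2 \<le> card {f\<in>G. v \<in> f}"
    using deg v unfolding min_degree_ge_def degree_def by auto
  then obtain e e' where e: "e \<in> G" "v \<in> e" "e' \<in> G" "v \<in> e'" "e \<noteq> e'"
    using two_elements by blast
  have at_v: "\<exists>u. f = {v,u}" if f: "f \<in> G" "v \<in> f" for f
  proof -
    obtain x y where "f = {x,y}" using graph_on_edge_pair[OF G f(1)] by blast
    then show ?thesis using f(2) by (auto simp: insert_commute)
  qed
  obtain u w where "e = {v,u}" "e' = {v,w}" using at_v e by metis
  then show "\<exists>u w. u \<noteq> w \<and> {v,u} \<in> G \<and> {v,w} \<in> G" using e by auto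
qed

definition star_at :: "'a set \<Rightarrow> 'a set set \<Rightarrow> 'a set \<Rightarrow> 'a \<Rightarrow> 'a \<Rightarrow> bool" where
  "star_at Y G S a b \<longleftrightarrow> (\<forall>r u. r \<in> Y - S \<longrightarrow> {r,u} \<in> G \<longrightarrow> u \<in> {a,b})"

definition full_star_at :: "'a set \<Rightarrow> 'a set set \<Rightarrow> 'a set \<Rightarrow> 'a \<Rightarrow> 'a \<Rightarrow> bool" where
  "full_star_at Y G S a b \<longleftrightarrow> (\<forall>r \<in> Y - S. {r,a} \<in> G \<and> {r,b} \<in> G)"

lemma star_full_star:
  assumes "two_neighbours Y G" and star: "star_at Y G S a b"
  shows "full_star_at Y G S a b"
  unfolding full_star_at_def
proof
  fix r assume r: "r \<in> Y - S"
  obtain u w where uw: "u \<noteq> w" "{r,u} \<in> G" "{r,w} \<in> G"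
    using two_neighboursD[OF assms(1)] r by blast
  then have "u \<in> {a,b}" "w \<in> {a,b}" using star r unfolding star_at_def by blast+
  then show "{r,a} \<in> G \<and> {r,b} \<in> G" using uw by auto
qed

text \<open>If G is a star at {a,b} relative to S = {a,a',b,b'} and does not contain the
  pair {a',b'}, then {a,b} covers every edge of G: an edge avoiding a and b has both
  ends in S, hence equals {a',b'}.\<close>
lemma star_covers:
  assumes G: "pair_edges_on Y G" and star: "star_at Y G {a,a',b,b'} a b"
    and no_spare: "{a',b'} \<notin> G" and uv: "{u,v} \<in> G"
  shows "u \<in> {a,b} \<or> v \<in> {a,b}"
proof (rule ccontr)
  assume avoid: "\<not> (u \<in> {a,b} \<or> v \<in> {a,b})"
  have ends: "u \<noteq> v" "u \<in> Y" "v \<in> Y" using pair_edgesD[OF G uv] by auto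
  have "{v,u} \<in> G" using uv by (simp add: insert_commute)
  then have "u \<in> {a,a',b,b'}" "v \<in> {a,a',b,b'}"
    using star avoid ends uv unfolding star_at_def by blast+
  then have "{u,v} = {a',b'}" using avoid ends(1) by auto
  then show False using no_spare uv by simp
qed

section \<open>Three graphs without a rainbow matching\<close>

text \<open>The hypothesis no_rainbow says: among an A-edge {a,b}, a B-edge {c,d} and a
  C-edge {p,q}, some two meet.\<close>
locale rainbow_free =
  fixes Y :: "'a set" and A B C :: "'a set set"
  assumes card_Y: "8 \<le> card Y"
    and edges_A: "pair_edges_on Y A" and edges_B: "pair_edges_on Y B"
    and edges_C: "pair_edges_on Y C"
    and deg_A: "two_neighbours Y A" and deg_B: "two_neighbours Y B"
    and deg_C: "two_neighbours Y C"
    and no_rainbow: "{a,b} \<in> A \<Longrightarrow> {c,d} \<in> B \<Longrightarrow> {p,q} \<in> C \<Longrightarrow>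
             a \<in> {c,d,p,q} \<or> b \<in> {c,d,p,q} \<or> c \<in> {p,q} \<or> d \<in> {p,q}"
begin

lemma fresh_vertex: "length xs < 8 \<Longrightarrow> \<exists>x\<in>Y. x \<notin> set xs"
proof (rule ccontr)
  assume short: "length xs < 8" and "\<not> (\<exists>x\<in>Y. x \<notin> set xs)"
  then have "card Y \<le> card (set xs)" by (simp add: card_mono subsetI)
  also have "\<dots> \<le> length xs" by (rule card_length)
  finally show False using short card_Y by linarith
qed

lemma swap_AB: "rainbow_free Y B A C"
proof
  fix a b c d p q assume "{a,b} \<in> B" "{c,d} \<in> A" "{p,q} \<in> C"
  then have "c \<in> {a,b,p,q} \<or> d \<in> {a,b,p,q} \<or> a \<in> {p,q} \<or> b \<in> {p,q}"
    using no_rainbow by blast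
  then show "a \<in> {c,d,p,q} \<or> b \<in> {c,d,p,q} \<or> c \<in> {p,q} \<or> d \<in> {p,q}" by auto
qed (use card_Y edges_A edges_B edges_C deg_A deg_B deg_C in auto)

text \<open>Otherwise, fixing an A-edge {x,y}, every B-edge at
  a vertex z outside {x,y} ends in {x,y}, so such z are B-adjacent to both x and y.  An
  A-edge at a further vertex z1 then either ends in x, missing the B-edge z2 y, or ends
  outside {x,y}, missing the B-edge z2 x or z3 x.\<close>
lemma disjoint_AB_edges:
  "\<exists>x1 y1 x2 y2. {x1,y1} \<in> A \<and> {x2,y2} \<in> B \<and> x1 \<notin> {x2,y2} \<and> y1 \<notin> {x2,y2}"
proof (rule ccontr)
  assume meet: "\<not> ?thesis"
  obtain x0 where x0: "x0 \<in> Y" using fresh_vertex[of "[]"] by auto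
  obtain x y where xy: "{x,y} \<in> A" using two_neighboursD[OF deg_A x0] by blast
  have B_both: "{z,x} \<in> B \<and> {z,y} \<in> B" if zY: "z \<in> Y" and z: "z \<notin> {x,y}" for z
  proof -
    obtain u w where uw: "u \<noteq> w" "{z,u} \<in> B" "{z,w} \<in> B"
      using two_neighboursD[OF deg_B zY] by blast
    have "u \<in> {x,y}" "w \<in> {x,y}" using meet xy uw z by blast+
    then show ?thesis using uw by auto
  qed
  obtain z1 where z1: "z1 \<in> Y" "z1 \<notin> set [x,y]" using fresh_vertex[of "[x,y]"] by auto
  obtain z2 where z2: "z2 \<in> Y" "z2 \<notin> set [x,y,z1]" using fresh_vertex[of "[x,y,z1]"] by auto
  obtain z3 where z3: "z3 \<in> Y" "z3 \<notin> set [x,y,z1,z2]"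
    using fresh_vertex[of "[x,y,z1,z2]"] by auto
  have B_edges: "{z2,x} \<in> B" "{z2,y} \<in> B" "{z3,x} \<in> B" using B_both z2 z3 by auto
  obtain u w where uw: "u \<noteq> w" "{z1,u} \<in> A" "{z1,w} \<in> A"
    using two_neighboursD[OF deg_A z1(1)] by blast
  show False
  proof (cases "u \<in> {x,y} \<and> w \<in> {x,y}")
    case True
    then have "{z1,x} \<in> A" using uw by auto
    then show False using meet B_edges z1 z2 pair_edgesD[OF edges_A xy] by auto
  next
    case False
    then obtain v where v: "{z1,v} \<in> A" "v \<notin> {x,y}" using uw by auto
    show False
    proof (cases "v = z2")
      case True
      then show False using meet v B_edges z1 z3 by auto
    next
      case False
      then show False using meet v B_edges z1 z2 pair_edgesD[OF edges_A v(1)] by auto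
    qed
  qed
qed

end

section \<open>A frame: disjoint edges of A and B\<close>

text \<open>A frame is a pair of disjoint edges {x1,y1} of A and {x2,y2} of B.  Vertices of Y
  outside {x1,y1,x2,y2} are called far.\<close>
locale frame = rainbow_free +
  fixes x1 y1 x2 y2 :: 'a
  assumes edge_A: "{x1,y1} \<in> A" and edge_B: "{x2,y2} \<in> B"
    and apart: "x1 \<notin> {x2,y2}" "y1 \<notin> {x2,y2}"
begin

lemma x1_y1: "x1 \<noteq> y1" using pair_edgesD[OF edges_A edge_A] by simp
lemma x2_y2: "x2 \<noteq> y2" using pair_edgesD[OF edges_B edge_B] by simp

lemma swap_frame: "frame Y B A C x2 y2 x1 y1"
  using swap_AB edge_A edge_B apart
  by (auto simp: frame_def frame_axioms_def)

lemma flip_frame: "frame Y A B C y1 x1 x2 y2"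
  using frame_axioms edge_A
  by (auto simp: frame_def frame_axioms_def insert_commute)

lemma far_C_edge_in_frame:
  assumes r: "r \<notin> {x1,y1,x2,y2}" and rt: "{r,t} \<in> C"
  shows "t \<in> {x1,y1,x2,y2}"
  using no_rainbow[OF edge_A edge_B rt] apart r by auto

text \<open>If a far vertex r is C-adjacent to both x1 and y1, then every A-edge at a vertex
  far from the frame and from r ends in {x2,y2}, by the rainbow condition against the
  two C-edges at r.\<close>
lemma A_neighbour_in_edge_B:
  assumes r: "r \<notin> {x1,y1,x2,y2}" and hx: "{r,x1} \<in> C" and hy: "{r,y1} \<in> C"
    and zY: "z \<in> Y" and z: "z \<notin> {x1,y1,x2,y2,r}"
  shows "\<exists>t\<in>{x2,y2}. {z,t} \<in> A"
proof -
  have A_ends: "u \<in> {r,x2,y2}" if zu: "{z,u} \<in> A" for u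
  proof -
    have "u \<in> {x2,y2,r,x1}" using no_rainbow[OF zu edge_B hx] z apart r by auto
    moreover have "u \<in> {x2,y2,r,y1}" using no_rainbow[OF zu edge_B hy] z apart r by auto
    ultimately show ?thesis using x1_y1 by auto
  qed
  obtain u w where uw: "u \<noteq> w" "{z,u} \<in> A" "{z,w} \<in> A"
    using two_neighboursD[OF deg_A zY] by blast
  then show ?thesis using A_ends[OF uw(2)] A_ends[OF uw(3)] by auto
qed

text \<open>Otherwise three further
  far vertices r1, r2, r3 give: A-edges r1 t1, r2 t2 into {x2,y2}; this forces the
  B-edge r3 r; and a C-edge at r2 avoiding t1 completes a rainbow matching.\<close>
lemma no_far_C_fork:
  assumes r: "r \<notin> {x1,y1,x2,y2}"
    and hx: "{r,x1} \<in> C" and hy: "{r,y1} \<in> C"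
  shows False
proof -
  obtain r1 where r1: "r1 \<in> Y" "r1 \<notin> set [x1,y1,x2,y2,r]"
    using fresh_vertex[of "[x1,y1,x2,y2,r]"] by auto
  obtain r2 where r2: "r2 \<in> Y" "r2 \<notin> set [x1,y1,x2,y2,r,r1]"
    using fresh_vertex[of "[x1,y1,x2,y2,r,r1]"] by auto
  obtain r3 where r3: "r3 \<in> Y" "r3 \<notin> set [x1,y1,x2,y2,r,r1,r2]"
    using fresh_vertex[of "[x1,y1,x2,y2,r,r1,r2]"] by auto
  obtain t1 where t1: "t1 \<in> {x2,y2}" "{r1,t1} \<in> A"
    using A_neighbour_in_edge_B[OF r hx hy r1(1)] r1 by auto
  obtain t2 where t2: "t2 \<in> {x2,y2}" "{r2,t2} \<in> A"
    using A_neighbour_in_edge_B[OF r hx hy r2(1)] r2 by auto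
  have B_ends: "u \<in> {r,t1}" if h: "{r3,u} \<in> B" for u
  proof -
    have "u \<in> {r1,t1,r,x1}" using no_rainbow[OF t1(2) h hx] r1 r3 t1(1) r apart by auto
    moreover have "u \<in> {r1,t1,r,y1}" using no_rainbow[OF t1(2) h hy] r1 r3 t1(1) r apart by auto
    moreover have "u \<in> {r2,t2,r,x1}" using no_rainbow[OF t2(2) h hx] r2 r3 t2(1) r apart by auto
    moreover have "u \<in> {r2,t2,r,y1}" using no_rainbow[OF t2(2) h hy] r2 r3 t2(1) r apart by auto
    ultimately show ?thesis using x1_y1 r1 r2 t1(1) t2(1) by auto
  qed
  obtain u w where uw: "u \<noteq> w" "{r3,u} \<in> B" "{r3,w} \<in> B"
    using two_neighboursD[OF deg_B r3(1)] by blast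
  then have B_r3_r: "{r3,r} \<in> B" using B_ends[OF uw(2)] B_ends[OF uw(3)] by auto
  obtain s where s: "{r2,s} \<in> C" "s \<noteq> t1"
    using two_neighboursD[OF deg_C r2(1)] by metis
  have "s \<in> {x1,y1,x2,y2}" using far_C_edge_in_frame[OF _ s(1)] r2 by auto
  then have "r1 \<notin> {r3,r,r2,s}" "t1 \<notin> {r3,r,r2,s}" "r3 \<notin> {r2,s}" "r \<notin> {r2,s}"
    using r1 r2 r3 r t1(1) s(2) by auto
  then show False using no_rainbow[OF t1(2) B_r3_r s(1)] by blast
qed

text \<open>Hence every far vertex has a C-neighbour in each frame edge: its two
  C-neighbours lie in the frame and cannot both be ends of one frame edge.\<close>
lemma far_C_neighbour_in_edge_B:
  assumes rY: "r \<in> Y" and r: "r \<notin> {x1,y1,x2,y2}"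
  shows "\<exists>b\<in>{x2,y2}. {r,b} \<in> C"
proof -
  obtain u w where uw: "u \<noteq> w" "{r,u} \<in> C" "{r,w} \<in> C"
    using two_neighboursD[OF deg_C rY] by blast
  have "u \<in> {x1,y1,x2,y2}" "w \<in> {x1,y1,x2,y2}"
    using far_C_edge_in_frame[OF r] uw by auto
  moreover have "\<not> ({r,x1} \<in> C \<and> {r,y1} \<in> C)" using no_far_C_fork[OF r] by blast
  ultimately show ?thesis using uw by auto
qed

lemma far_C_neighbour_in_edge_A:
  assumes rY: "r \<in> Y" and r: "r \<notin> {x1,y1,x2,y2}"
  shows "\<exists>a\<in>{x1,y1}. {r,a} \<in> C"
  using frame.far_C_neighbour_in_edge_B[OF swap_frame rY] r by auto

text \<open>Here all far vertices other than r, r' are A-adjacent to both x2 and y2, which forces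
  the B-edge r y1, and a C-edge from r' to {x2,y2} completes a rainbow matching.\<close>
lemma no_far_C_pair:
  assumes rY: "r \<in> Y" and r: "r \<notin> {x1,y1,x2,y2}"
    and r'Y: "r' \<in> Y" and r': "r' \<notin> {x1,y1,x2,y2}" and rr': "r \<noteq> r'"
    and hx: "{r,x1} \<in> C" and hy: "{r',y1} \<in> C"
  shows False
proof -
  obtain r2 where r2: "r2 \<in> Y" "r2 \<notin> set [x1,y1,x2,y2,r,r']"
    using fresh_vertex[of "[x1,y1,x2,y2,r,r']"] by auto
  obtain r3 where r3: "r3 \<in> Y" "r3 \<notin> set [x1,y1,x2,y2,r,r',r2]"
    using fresh_vertex[of "[x1,y1,x2,y2,r,r',r2]"] by auto
  have A_both: "{z,x2} \<in> A \<and> {z,y2} \<in> A" if zY: "z \<in> Y" and z: "z \<notin> {x1,y1,x2,y2,r,r'}" for z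
  proof -
    have A_ends: "u \<in> {x2,y2}" if zu: "{z,u} \<in> A" for u
    proof -
      have "u \<in> {x2,y2,r,x1}" using no_rainbow[OF zu edge_B hx] z apart r by auto
      moreover have "u \<in> {x2,y2,r',y1}" using no_rainbow[OF zu edge_B hy] z apart r' by auto
      ultimately show ?thesis using x1_y1 rr' r r' by auto
    qed
    obtain u w where uw: "u \<noteq> w" "{z,u} \<in> A" "{z,w} \<in> A"
      using two_neighboursD[OF deg_A zY] by blast
    then show ?thesis using A_ends[OF uw(2)] A_ends[OF uw(3)] by auto
  qed
  have A2: "{r2,x2} \<in> A" "{r2,y2} \<in> A" and A3: "{r3,x2} \<in> A" "{r3,y2} \<in> A"
    using A_both[of r2] A_both[of r3] r2 r3 by auto
  have B_ends: "u \<in> {r',y1}" if h: "{r,u} \<in> B" for u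
  proof -
    have "u \<in> {r3,y2,r',y1}" using no_rainbow[OF A3(2) h hy] r3 r r' rr' apart by auto
    moreover have "u \<in> {r3,x2,r',y1}" using no_rainbow[OF A3(1) h hy] r3 r r' rr' apart by auto
    moreover have "u \<in> {r2,y2,r',y1}" using no_rainbow[OF A2(2) h hy] r2 r r' rr' apart by auto
    ultimately show ?thesis using x2_y2 r2 r3 apart by auto
  qed
  obtain u w where uw: "u \<noteq> w" "{r,u} \<in> B" "{r,w} \<in> B"
    using two_neighboursD[OF deg_B rY] by blast
  then have B_r_y1: "{r,y1} \<in> B" using B_ends[OF uw(2)] B_ends[OF uw(3)] by auto
  obtain \<beta> where \<beta>: "\<beta> \<in> {x2,y2}" "{r',\<beta>} \<in> C"
    using far_C_neighbour_in_edge_B[OF r'Y r'] by blast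
  show False
    using no_rainbow[OF A2(1) B_r_y1 \<beta>(2)] no_rainbow[OF A2(2) B_r_y1 \<beta>(2)] \<beta>(1)
      r2 r r' rr' apart x2_y2 by auto
qed

text \<open>Combining the last two lemmas (and their mirror images under the frame
  symmetries): far C-edges never reach both ends of one frame edge.\<close>
lemma no_far_C_edges_to_edge_A:
  assumes rY: "r \<in> Y" and r: "r \<notin> {x1,y1,x2,y2}"
    and r'Y: "r' \<in> Y" and r': "r' \<notin> {x1,y1,x2,y2}"
    and pq: "p \<in> {x1,y1}" "q \<in> {x1,y1}" "p \<noteq> q"
    and hp: "{r,p} \<in> C" and hq: "{r',q} \<in> C"
  shows False
proof (cases "r = r'")
  case True
  then show ?thesis using no_far_C_fork[OF r] pq hp hq by (auto simp: insert_commute)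
next
  case False
  show ?thesis
  proof (cases "p = x1")
    case True
    then show ?thesis using no_far_C_pair[OF rY r r'Y r' False] pq hp hq by auto
  next
    case False
    then have "p = y1" "q = x1" using pq by auto
    then show ?thesis
      using frame.no_far_C_pair[OF flip_frame rY _ r'Y _ \<open>r \<noteq> r'\<close>] hp hq r r' by auto
  qed
qed

lemma no_far_C_edges_to_edge_B:
  assumes "r \<in> Y" "r \<notin> {x1,y1,x2,y2}" "r' \<in> Y" "r' \<notin> {x1,y1,x2,y2}"
    and "p \<in> {x2,y2}" "q \<in> {x2,y2}" "p \<noteq> q" and "{r,p} \<in> C" "{r',q} \<in> C"
  shows False
  using frame.no_far_C_edges_to_edge_A[OF swap_frame assms(1) _ assms(3) _ assms(5-9)]
    assms(2,4) by auto

text \<open>The C-edges at far vertices form a star at one end of each frame edge: take the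
  C-neighbours a, b of one far vertex in the two frame edges.\<close>
lemma C_star:
  "\<exists>a\<in>{x1,y1}. \<exists>b\<in>{x2,y2}. star_at Y C {x1,y1,x2,y2} a b"
proof -
  obtain r0 where r0: "r0 \<in> Y" "r0 \<notin> {x1,y1,x2,y2}"
    using fresh_vertex[of "[x1,y1,x2,y2]"] by auto
  obtain a where a: "a \<in> {x1,y1}" "{r0,a} \<in> C" using far_C_neighbour_in_edge_A[OF r0] by blast
  obtain b where b: "b \<in> {x2,y2}" "{r0,b} \<in> C" using far_C_neighbour_in_edge_B[OF r0] by blast
  have "u \<in> {a,b}" if rY: "r \<in> Y" and r: "r \<notin> {x1,y1,x2,y2}" and ru: "{r,u} \<in> C" for r u
  proof -
    have "u \<in> {x1,y1,x2,y2}" using far_C_edge_in_frame[OF r ru] .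
    then consider "u \<in> {x1,y1}" | "u \<in> {x2,y2}" by auto
    then show ?thesis
    proof cases
      case 1
      then show ?thesis using no_far_C_edges_to_edge_A[OF r0 rY r a(1) _ _ a(2) ru] by auto
    next
      case 2
      then show ?thesis using no_far_C_edges_to_edge_B[OF r0 rY r b(1) _ _ b(2) ru] by auto
    qed
  qed
  then show ?thesis using a(1) b(1) unfolding star_at_def by blast
qed

text \<open>A B-edge w u with w far ends in {x1,y1,x2} by testing it against the
  C-edges r x2 of two further far vertices; and u = y1 is excluded since then some
  A-edge at a third far vertex ends in {x2,y2}, completing a rainbow matching.\<close>
lemma B_star_from_C:
  assumes C_full: "full_star_at Y C {x1,y1,x2,y2} x1 x2"
  shows "star_at Y B {x1,y1,x2,y2} x1 x2"
  unfolding star_at_def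
proof (intro allI impI)
  fix w u assume w: "w \<in> Y - {x1,y1,x2,y2}" and wu: "{w,u} \<in> B"
  obtain r where r: "r \<in> Y" "r \<notin> set [x1,y1,x2,y2,w]"
    using fresh_vertex[of "[x1,y1,x2,y2,w]"] by auto
  obtain r' where r': "r' \<in> Y" "r' \<notin> set [x1,y1,x2,y2,w,r]"
    using fresh_vertex[of "[x1,y1,x2,y2,w,r]"] by auto
  have C_r: "{r,x1} \<in> C" "{r,x2} \<in> C" and C_r': "{r',x2} \<in> C" and C_w: "{w,x1} \<in> C"
    using C_full r r' w unfolding full_star_at_def by auto
  have "u \<in> {x1,y1,r,x2}" using no_rainbow[OF edge_A wu C_r(2)] r w apart by auto
  moreover have "u \<in> {x1,y1,r',x2}" using no_rainbow[OF edge_A wu C_r'] r r' w apart by auto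
  ultimately have u: "u \<in> {x1,y1,x2}" using r' by auto
  have "u \<noteq> y1"
  proof
    assume u_y1: "u = y1"
    have A_ends: "v \<in> {x1,x2,y2}" if h: "{r',v} \<in> A" for v
    proof -
      have "v \<in> {x2,y2,w,x1}" using no_rainbow[OF h edge_B C_w] r' w apart by auto
      moreover have "v \<in> {x2,y2,r,x1}" using no_rainbow[OF h edge_B C_r(1)] r' r apart by auto
      ultimately show ?thesis using r w by auto
    qed
    obtain v1 v2 where vv: "v1 \<noteq> v2" "{r',v1} \<in> A" "{r',v2} \<in> A"
      using two_neighboursD[OF deg_A r'(1)] by blast
    then obtain v where v: "{r',v} \<in> A" "v \<in> {x2,y2}" using A_ends by blast
    show False
      using no_rainbow[OF v(1) wu[unfolded u_y1] C_r(1)] v(2) r r' w apart x1_y1 by auto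
  qed
  then show "u \<in> {x1,x2}" using u by auto
qed

lemma A_star_from_C:
  assumes C_full: "full_star_at Y C {x1,y1,x2,y2} x1 x2"
  shows "star_at Y A {x1,y1,x2,y2} x1 x2"
proof -
  have "full_star_at Y C {x2,y2,x1,y1} x2 x1"
    using C_full unfolding full_star_at_def by (simp add: insert_commute)
  then have "star_at Y A {x2,y2,x1,y1} x2 x1" using frame.B_star_from_C[OF swap_frame] by blast
  then show ?thesis unfolding star_at_def by (simp add: insert_commute)
qed

text \<open>If the C-edges at far vertices form a star at {x1,x2}, then {x1,x2} covers all
  three graphs: all of them are stars at {x1,x2}, and two far vertices show that the
  remaining frame pair {y1,y2} is an edge of none of them.\<close>
lemma cover_from_C_star:
  assumes C_star: "star_at Y C {x1,y1,x2,y2} x1 x2" and uv: "{u,v} \<in> A \<union> B \<union> C"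
  shows "u \<in> {x1,x2} \<or> v \<in> {x1,x2}"
proof -
  have C_full: "full_star_at Y C {x1,y1,x2,y2} x1 x2" using star_full_star[OF deg_C C_star] .
  have A_star: "star_at Y A {x1,y1,x2,y2} x1 x2" using A_star_from_C[OF C_full] .
  have B_star: "star_at Y B {x1,y1,x2,y2} x1 x2" using B_star_from_C[OF C_full] .
  obtain w1 where w1: "w1 \<in> Y" "w1 \<notin> set [x1,y1,x2,y2]"
    using fresh_vertex[of "[x1,y1,x2,y2]"] by auto
  obtain w2 where w2: "w2 \<in> Y" "w2 \<notin> set [x1,y1,x2,y2,w1]"
    using fresh_vertex[of "[x1,y1,x2,y2,w1]"] by auto
  have far_edges: "{w1,x1} \<in> A" "{w1,x1} \<in> B" "{w2,x2} \<in> B" "{w2,x2} \<in> C"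
    using star_full_star[OF deg_A A_star] star_full_star[OF deg_B B_star] C_full w1 w2
    unfolding full_star_at_def by auto
  have spare_pair: "y1 \<notin> {w1,x1,w2,x2}" "y2 \<notin> {w1,x1,w2,x2}" "w1 \<notin> {w2,x2}"
    "x1 \<notin> {w2,x2}" "w1 \<notin> {y1,y2}" "x1 \<notin> {y1,y2}" "w2 \<notin> {y1,y2}" "x2 \<notin> {y1,y2}"
    using w1 w2 apart x1_y1 x2_y2 by auto
  have "{y1,y2} \<notin> A" using no_rainbow[OF _ far_edges(2,4)] spare_pair by blast
  moreover have "{y1,y2} \<notin> B" using no_rainbow[OF far_edges(1) _ far_edges(4)] spare_pair by blast
  moreover have "{y1,y2} \<notin> C" using no_rainbow[OF far_edges(1,3)] spare_pair by blast
  ultimately show ?thesis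
    using star_covers[OF edges_A A_star] star_covers[OF edges_B B_star]
      star_covers[OF edges_C C_star] uv by blast
qed

end

text \<open>Three graphs without a rainbow matching have a common vertex cover of size two.
  Take a frame, relabel it so that the C-star sits at its first vertices, and apply
  the cover lemma.\<close>
lemma (in rainbow_free) two_vertex_cover:
  "\<exists>a\<in>Y. \<exists>b\<in>Y. \<forall>u v. {u,v} \<in> A \<union> B \<union> C \<longrightarrow> u \<in> {a,b} \<or> v \<in> {a,b}"
proof -
  obtain x1 y1 x2 y2 where "frame Y A B C x1 y1 x2 y2"
    using disjoint_AB_edges rainbow_free_axioms by (auto simp: frame_def frame_axioms_def)
  then interpret F: frame Y A B C x1 y1 x2 y2 .
  obtain a b where ab: "a \<in> {x1,y1}" "b \<in> {x2,y2}" and star: "star_at Y C {x1,y1,x2,y2} a b"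
    using F.C_star by blast
  obtain a' b' where a': "{a,a'} = {x1,y1}" and b': "{b,b'} = {x2,y2}"
    using ab by (auto simp: insert_commute)
  have frame_S: "{a,a',b,b'} = {x1,y1,x2,y2}" using a' b' by auto
  have a'_in: "a' \<in> {x1,y1}" by (metis a' insert_iff)
  have "{a,a'} \<in> A" "{b,b'} \<in> B" using F.edge_A F.edge_B a' b' by simp_all
  moreover have "a \<notin> {b,b'}" "a' \<notin> {b,b'}" unfolding b' using ab(1) a'_in F.apart by auto
  ultimately interpret F': frame Y A B C a a' b b'
    by (intro frame.intro frame_axioms.intro rainbow_free_axioms)
  have "star_at Y C {a,a',b,b'} a b" using star frame_S by simp
  then have "\<forall>u v. {u,v} \<in> A \<union> B \<union> C \<longrightarrow> u \<in> {a,b} \<or> v \<in> {a,b}"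
    using F'.cover_from_C_star by blast
  moreover have "a \<in> Y" "b \<in> Y"
    using ab pair_edgesD[OF edges_A F.edge_A] pair_edgesD[OF edges_B F.edge_B] by auto
  ultimately show ?thesis by blast
qed

lemma no_disjoint_triple_pairs:
  assumes no_triple: "\<not> (\<exists>e1\<in>G1. \<exists>e2\<in>G2. \<exists>e3\<in>G3.
              e1 \<inter> e2 = {} \<and> e1 \<inter> e3 = {} \<and> e2 \<inter> e3 = {})"
    and edges: "{a,b} \<in> G1" "{c,d} \<in> G2" "{p,q} \<in> G3"
  shows "a \<in> {c,d,p,q} \<or> b \<in> {c,d,p,q} \<or> c \<in> {p,q} \<or> d \<in> {p,q}"
proof (rule ccontr)
  assume "\<not> ?thesis"
  then have "{a,b} \<inter> {c,d} = {} \<and> {a,b} \<inter> {p,q} = {} \<and> {c,d} \<inter> {p,q} = {}" by auto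
  then have "\<exists>e1\<in>G1. \<exists>e2\<in>G2. \<exists>e3\<in>G3. e1 \<inter> e2 = {} \<and> e1 \<inter> e3 = {} \<and> e2 \<inter> e3 = {}"
    using edges by (intro bexI[of _ "{a,b}"] bexI[of _ "{c,d}"] bexI[of _ "{p,q}"])
  then show False using no_triple by contradiction
qed

text \<open>The three graphs satisfy the locale hypotheses (finiteness of Y is implied by
  card Y \<ge> 8 and not needed), and a two-vertex cover of all pair edges is one of all
  edges, since every edge is a pair.\<close>
theorem mainTheorem14:
  fixes Y :: "'a set" and G1 G2 G3 :: "'a set set"
  assumes "finite Y" and "card Y \<ge> 8"
    and "graph_on Y G1" and "graph_on Y G2" and "graph_on Y G3"
    and "min_degree_ge Y G1 2" and "min_degree_ge Y G2 2" and "min_degree_ge Y G3 2"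
    and "\<not> (\<exists>e1\<in>G1. \<exists>e2\<in>G2. \<exists>e3\<in>G3.
              e1 \<inter> e2 = {} \<and> e1 \<inter> e3 = {} \<and> e2 \<inter> e3 = {})"
  shows "\<exists>a\<in>Y. \<exists>b\<in>Y. \<forall>e \<in> G1 \<union> G2 \<union> G3. a \<in> e \<or> b \<in> e"
proof -
  have "rainbow_free Y G1 G2 G3"
    using assms(2) graph_on_pair_edges[OF assms(3)] graph_on_pair_edges[OF assms(4)]
      graph_on_pair_edges[OF assms(5)] min_degree_two_neighbours[OF assms(3,6)]
      min_degree_two_neighbours[OF assms(4,7)] min_degree_two_neighbours[OF assms(5,8)]
      no_disjoint_triple_pairs[OF assms(9)]
    by (rule rainbow_free.intro)
  then obtain a b where ab: "a \<in> Y" "b \<in> Y"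
    and cover: "\<And>u v. {u,v} \<in> G1 \<union> G2 \<union> G3 \<Longrightarrow> u \<in> {a,b} \<or> v \<in> {a,b}"
    using rainbow_free.two_vertex_cover by blast
  have "a \<in> e \<or> b \<in> e" if e: "e \<in> G1 \<union> G2 \<union> G3" for e
  proof -
    obtain u v where "e = {u,v}"
      using e graph_on_edge_pair[OF assms(3)] graph_on_edge_pair[OF assms(4)]
        graph_on_edge_pair[OF assms(5)] by blast
    then show ?thesis using cover e by auto
  qed
  then show ?thesis using ab by blast
qed

end
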